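(* Let $\mathcal{G}=(V,E_L,E_R)$ and $\mathcal{G}'=(V',E'_L,E'_R)$ be achievement positional games with $V\cap V'=\varnothing$. Suppose Left has a winning strategy on $\mathcal{G}$ as first player and Right has a winning strategy on $\mathcal{G}'$ as first player. Let $d$ be the Left-delay of $\mathcal{G}$ and $d'$ the Right-delay of $\mathcal{G}'$. If $d\le d'$, then Left has a winning strategy on $\mathcal{G}\cup\mathcal{G}'$ as first player; if $d'\le d$, then Right has a winning strategy on $\mathcal{G}\cup\mathcal{G}'$ as first player. In particular, at least one of Left and Right has a winning strategy as first player on $\mathcal{G}\cup\mathcal{G}'$.
   Context: A hypergraph is a pair $(V,E)$ with $V$ finite and $E\subseteq 2^V\setminus\{\varnothing\}$. An achievement positional game is a triple $\mathcal{G}=(V,E_L,E_R)$ where $(V,E_L)$ and $(V,E_R)$ are hypergraphs; elements of $E_L$ are blue edges, elements of $E_R$ are red edges. Two players, Left and Right, alternately pick a previously unpicked vertex of $V$ (either player may be designated to start). A player fills an edge when they have picked all its vertices. If Left fills a blue edge before Right fills a red edge, Left wins; if Right fills a red edge before Left fills a blue edge, Right wins; if neither happens before all vertices are picked, the game is a draw. The disjoint union of games with disjoint vertex sets is $\mathcal{G}\cup\mathcal{G}'=(V\cup V',E_L\cup E'_L,E_R\cup E'_R)$. Left-delay: if Left has a winning strategy on $\mathcal{G}$ as first player, consider the scoring game in which Left moves first and plays normally, while Right, on each of her turns, may either pick an unpicked vertex or pass. The game ends when Left fills a blue edge, Right fills a red edge, or all vertices are picked. The score is $+\infty$ if Left has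 not filled a blue edge, and otherwise the total number of passes made by Right. Left minimizes and Right maximizes the score; the Left-delay of $\mathcal{G}$ is the value of this game under optimal play (finite under the hypothesis). The Right-delay of a game on which Right has a winning strategy as first player is defined symmetrically (roles of Left/Right and blue/red swapped). *)

theory Defs
  imports Main "HOL-Library.Extended_Nat"
begin

definition hypergraph :: "'a set \<Rightarrow> 'a set set \<Rightarrow> bool" where
  "hypergraph V E \<longleftrightarrow> finite V \<and> (\<forall>e\<in>E. e \<subseteq> V \<and> e \<noteq> {})"

definition fills :: "'a set set \<Rightarrow> 'a set \<Rightarrow> bool" where
  "fills E A \<longleftrightarrow> (\<exists>e\<in>E. e \<subseteq> A)"

text \<open>Positions: A = vertices picked by Left, B = vertices picked by Right,
  the boolean says whether it is Left's turn.
  lwins V EL ER A B t : Left can force a win (fill a blue edge before Right fills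
  a red edge) from this position.\<close>
inductive lwins :: "'a set \<Rightarrow> 'a set set \<Rightarrow> 'a set set \<Rightarrow> 'a set \<Rightarrow> 'a set \<Rightarrow> bool \<Rightarrow> bool"
  for V EL ER where
  base: "fills EL A \<Longrightarrow> \<not> fills ER B \<Longrightarrow> lwins V EL ER A B t"
| left_move: "\<not> fills EL A \<Longrightarrow> \<not> fills ER B \<Longrightarrow> v \<in> V - A - B \<Longrightarrow>
     lwins V EL ER (insert v A) B False \<Longrightarrow> lwins V EL ER A B True"
| right_move: "\<not> fills EL A \<Longrightarrow> \<not> fills ER B \<Longrightarrow> V - A - B \<noteq> {} \<Longrightarrow>
     (\<forall>v \<in> V - A - B. lwins V EL ER A (insert v B) True) \<Longrightarrow> lwins V EL ER A B False"

definition left_first_wins :: "'a set \<Rightarrow> 'a set set \<Rightarrow> 'a set set \<Rightarrow> bool" where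
  "left_first_wins V EL ER \<longleftrightarrow> lwins V EL ER {} {} True"

definition right_first_wins :: "'a set \<Rightarrow> 'a set set \<Rightarrow> 'a set set \<Rightarrow> bool" where
  "right_first_wins V EL ER \<longleftrightarrow> lwins V ER EL {} {} True"

text \<open>Delay scoring game: ldelay_le V EL ER A B t k means Left (moving normally,
  Right may pick or pass) can force that Left fills a blue edge (before Right fills a
  red edge and before all vertices are picked) with at most k further passes by Right,
  i.e. Left can guarantee a score \<le> (passes so far) + k.\<close>
inductive ldelay_le :: "'a set \<Rightarrow> 'a set set \<Rightarrow> 'a set set \<Rightarrow> 'a set \<Rightarrow> 'a set \<Rightarrow> bool \<Rightarrow> nat \<Rightarrow> bool"
  for V EL ER where
  base: "fills EL A \<Longrightarrow> \<not> fills ER B \<Longrightarrow> ldelay_le V EL ER A B t k"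
| left_move: "\<not> fills EL A \<Longrightarrow> \<not> fills ER B \<Longrightarrow> v \<in> V - A - B \<Longrightarrow>
     ldelay_le V EL ER (insert v A) B False k \<Longrightarrow> ldelay_le V EL ER A B True k"
| right_move: "\<not> fills EL A \<Longrightarrow> \<not> fills ER B \<Longrightarrow> V - A - B \<noteq> {} \<Longrightarrow>
     (\<forall>v \<in> V - A - B. ldelay_le V EL ER A (insert v B) True k) \<Longrightarrow>
     ldelay_le V EL ER A B True (k - 1) \<Longrightarrow> k > 0 \<Longrightarrow>
     ldelay_le V EL ER A B False k"

text \<open>Left-delay: value of the scoring game (Left minimises, Right maximises),
  i.e. the least score Left can guarantee; \<infinity> if none.\<close>
definition left_delay :: "'a set \<Rightarrow> 'a set set \<Rightarrow> 'a set set \<Rightarrow> enat" where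
  "left_delay V EL ER = Inf {enat k | k. ldelay_le V EL ER {} {} True k}"

definition right_delay :: "'a set \<Rightarrow> 'a set set \<Rightarrow> 'a set set \<Rightarrow> enat" where
  "right_delay V EL ER = left_delay V ER EL"

end

theory Submission
  imports Defs
begin

text \<open>Left plays his delay strategy on \<open>G\<close> and reads every move of Right in \<open>G'\<close> as a pass.
  This keeps his remaining delay on \<open>G\<close> bounded by Right's remaining delay on \<open>G'\<close>;
  whenever a move of Right in \<open>G'\<close> threatens to shrink her delay below his, Left answers
  inside \<open>G'\<close> at a vertex that restores the inequality, and such a vertex exists because
  otherwise Right's delay at the previous position would already have been smaller.
  Hence Left fills a blue edge of \<open>G\<close> before Right can fill a red edge of \<open>G'\<close>.
  The second claim is the first one with the roles of the players exchanged.\<close>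

lemma fills_mono: "fills E X \<Longrightarrow> X \<subseteq> Y \<Longrightarrow> fills E Y"
  unfolding fills_def by blast

lemma fills_Un: "fills (E \<union> E') X \<longleftrightarrow> fills E X \<or> fills E' X"
  unfolding fills_def by blast

lemma fills_Un_disjoint:
  assumes "hypergraph V E" and "X' \<inter> V = {}"
  shows "fills E (X \<union> X') \<longleftrightarrow> fills E X"
proof -
  have "e \<subseteq> X \<union> X' \<longleftrightarrow> e \<subseteq> X" if "e \<in> E" for e
    using assms that unfolding hypergraph_def by blast
  then show ?thesis unfolding fills_def by blast
qed

lemma not_fills_empty: "hypergraph V E \<Longrightarrow> \<not> fills E {}"
  unfolding hypergraph_def fills_def by blast

lemma card_Diff_insert_less:
  assumes "finite V" and "v \<in> V - A - B"
  shows "card (V - insert v A - B) < card (V - A - B)" and "card (V - A - insert v B) < card (V - A - B)"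
  by (rule psubset_card_mono; use assms in auto)+

lemma lwins_imp_fills_complement:
  "lwins V EL ER A B t \<Longrightarrow> A \<subseteq> V - B \<Longrightarrow> fills EL (V - B)"
proof (induction rule: lwins.induct)
  case (base A B t)
  then show ?case using fills_mono by blast
next
  case (left_move A B v)
  then show ?case by (intro left_move.IH) blast
next
  case (right_move A B)
  then obtain w where w: "w \<in> V - A - B" by blast
  with right_move.IH right_move.prems have "fills EL (V - insert w B)" by blast
  then show ?case using fills_mono by blast
qed

lemma lwins_left_move_any:
  "\<not> fills ER B \<Longrightarrow> v \<in> V - A - B \<Longrightarrow> lwins V EL ER (insert v A) B False \<Longrightarrow>
   lwins V EL ER A B True"
  by (cases "fills EL A") (auto intro: lwins.base lwins.left_move)

text \<open>If the vertex Left would take is already his, the complement still contains a free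
  vertex, since a winning Left can fill a blue edge outside Right's vertices.\<close>

lemma lwins_mono:
  "lwins V EL ER A B t \<Longrightarrow> A \<subseteq> A2 \<Longrightarrow> A2 \<subseteq> V - B \<Longrightarrow> lwins V EL ER A2 B t"
proof (induction arbitrary: A2 rule: lwins.induct)
  case (base A B t)
  then show ?case using fills_mono lwins.base by blast
next
  case (left_move A B v)
  show ?case
  proof (cases "fills EL A2")
    case True
    then show ?thesis using left_move.hyps(2) by (rule lwins.base)
  next
    case False
    obtain x where x: "x \<in> V - A2 - B" and sub: "insert v A \<subseteq> insert x A2"
    proof (cases "v \<in> A2")
      case True
      have "fills EL (V - B)"
        using lwins_imp_fills_complement[OF left_move.hyps(4)] left_move.hyps(3) left_move.prems
        by blast
      then obtain x where "x \<in> V - A2 - B" using False fills_mono by blast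
      then show ?thesis using that True left_move.prems(1) by blast
    next
      case False
      then show ?thesis using that left_move.hyps(3) left_move.prems(1) by blast
    qed
    with left_move.prems(2) have "lwins V EL ER (insert x A2) B False"
      by (intro left_move.IH) blast+
    with False left_move.hyps(2) x show ?thesis by (intro lwins.left_move)
  qed
next
  case (right_move A B)
  show ?case
  proof (cases "fills EL A2")
    case False
    obtain w where w: "w \<in> V - A - B" using right_move.hyps(3) by blast
    moreover have "lwins V EL ER A (insert w B) True" using right_move.IH w by blast
    ultimately have "fills EL (V - insert w B)"
      using right_move.prems lwins_imp_fills_complement by blast
    then have "V - A2 - B \<noteq> {}" using False fills_mono by blast
    moreover have "\<forall>v\<in>V - A2 - B. lwins V EL ER A2 (insert v B) True"
      using right_move.IH right_move.prems by blast
    ultimately show ?thesis using False right_move.hyps(2) by (intro lwins.right_move)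
  qed (use right_move.hyps(2) in \<open>blast intro: lwins.base\<close>)
qed

lemma lwins_right_turn_imp_left_turn:
  assumes "lwins V EL ER A B False" and "A \<subseteq> V - B"
  shows "lwins V EL ER A B True"
  using assms(1)
proof (cases rule: lwins.cases)
  case right_move
  then obtain x where x: "x \<in> V - A - B" by blast
  with assms have "lwins V EL ER (insert x A) B False" by (blast intro: lwins_mono)
  with right_move x show ?thesis by (blast intro: lwins.left_move)
qed (auto intro: lwins.base)

subsection \<open>The delay game\<close>

lemma ldelay_le_mono:
  "ldelay_le V EL ER A B t k \<Longrightarrow> k \<le> k' \<Longrightarrow> ldelay_le V EL ER A B t k'"
proof (induction arbitrary: k' rule: ldelay_le.induct)
  case (base A B t k)
  then show ?case by (simp add: ldelay_le.base)
next
  case (left_move A B v k)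
  then show ?case by (blast intro: ldelay_le.left_move)
next
  case (right_move A B k)
  have "\<forall>v\<in>V - A - B. ldelay_le V EL ER A (insert v B) True k'"
    using right_move.IH(1) right_move.prems by blast
  moreover have "ldelay_le V EL ER A B True (k' - 1)"
    using right_move.IH(2) right_move.prems by simp
  ultimately show ?case
    using right_move.hyps(1-3,5) right_move.prems by (intro ldelay_le.right_move) auto
qed

lemma ldelay_le_right_turn:
  assumes "\<not> fills ER B" and "ldelay_le V EL ER A B True j" and "j < k"
    and "\<forall>v\<in>V - A - B. ldelay_le V EL ER A (insert v B) True k"
  shows "ldelay_le V EL ER A B False k"
proof (cases "fills EL A")
  case True
  with assms(1) show ?thesis by (simp add: ldelay_le.base)
next
  case False
  from assms(2) have "V - A - B \<noteq> {}"
    by (cases rule: ldelay_le.cases) (use False in auto)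
  moreover have "ldelay_le V EL ER A B True (k - 1)"
    using assms(2,3) by (auto intro: ldelay_le_mono)
  ultimately show ?thesis using False assms by (intro ldelay_le.right_move) auto
qed

lemma no_ldelay_le_after_left_move:
  assumes "\<forall>j<k. \<not> ldelay_le V EL ER A B True j" and "\<not> fills ER B" and "v \<in> V - A - B"
  shows "\<forall>j<k. \<not> ldelay_le V EL ER (insert v A) B False j"
proof (intro allI impI notI)
  fix j assume "j < k" and delay: "ldelay_le V EL ER (insert v A) B False j"
  then have "\<not> fills EL A" using assms(1,2) ldelay_le.base by blast
  with assms(2,3) delay have "ldelay_le V EL ER A B True j" by (intro ldelay_le.left_move)
  with \<open>j < k\<close> assms(1) show False by blast
qed

text \<open>Right passes at most once between two moves of Left and every move of Left uses up a
  free vertex, so the number of free vertices bounds the number of passes.\<close>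

lemma lwins_imp_ldelay_le_card:
  assumes "finite V"
  shows "lwins V EL ER A B t \<Longrightarrow> A \<subseteq> V - B \<Longrightarrow> ldelay_le V EL ER A B t (card (V - A - B))"
proof (induction "card (V - A - B)" arbitrary: A B t rule: less_induct)
  case less
  let ?n = "card (V - A - B)"
  have left_turn: "ldelay_le V EL ER A B True (?n - 1)" if "lwins V EL ER A B True"
    using that
  proof (cases rule: lwins.cases)
    case (left_move v)
    with less.prems(2) have "ldelay_le V EL ER (insert v A) B False (card (V - insert v A - B))"
      by (intro less.hyps card_Diff_insert_less(1)[OF assms]) auto
    moreover have "card (V - insert v A - B) = ?n - 1"
    proof -
      have "V - insert v A - B = V - A - B - {v}" by blast
      then show ?thesis using left_move(3) by (simp add: card_Diff_singleton)
    qed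
    ultimately show ?thesis using left_move(1-3) by (metis ldelay_le.left_move)
  qed (simp_all add: ldelay_le.base)
  show ?case
  proof (cases t)
    case True
    with less.prems(1) have "ldelay_le V EL ER A B True (?n - 1)" by (intro left_turn) simp
    with True show ?thesis by (auto elim: ldelay_le_mono)
  next
    case False
    with less.prems(1) have won: "lwins V EL ER A B False" by simp
    then show ?thesis
    proof (cases rule: lwins.cases)
      case right_move
      have "\<forall>v\<in>V - A - B. ldelay_le V EL ER A (insert v B) True ?n"
      proof
        fix v assume v: "v \<in> V - A - B"
        with less.prems(2) right_move(4) have "ldelay_le V EL ER A (insert v B) True (card (V - A - insert v B))"
          by (intro less.hyps card_Diff_insert_less(2)[OF assms]) auto
        moreover have "card (V - A - insert v B) \<le> ?n"
          using v assms by (intro card_mono) auto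
        ultimately show "ldelay_le V EL ER A (insert v B) True ?n" by (rule ldelay_le_mono)
      qed
      moreover have "ldelay_le V EL ER A B True (?n - 1)"
        using left_turn lwins_right_turn_imp_left_turn[OF won less.prems(2)] by blast
      moreover have "0 < ?n" using right_move(3) assms by (simp add: card_gt_0_iff)
      ultimately show ?thesis using right_move(1-3) False by (simp add: ldelay_le.right_move)
    qed (simp_all add: ldelay_le.base)
  qed
qed

lemma left_delay_le: "ldelay_le V EL ER {} {} True k \<Longrightarrow> left_delay V EL ER \<le> enat k"
  unfolding left_delay_def by (blast intro: Inf_lower)

lemma left_delay_attained:
  assumes "ldelay_le V EL ER {} {} True k"
  obtains k0 where "ldelay_le V EL ER {} {} True k0" and "left_delay V EL ER = enat k0"
proof -
  let ?S = "{enat k | k. ldelay_le V EL ER {} {} True k}"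
  have "?S \<noteq> {}" using assms by blast
  then have "Inf ?S \<in> ?S" unfolding Inf_enat_def by (auto intro: LeastI)
  with that show ?thesis unfolding left_delay_def by blast
qed

subsection \<open>Combining the delay strategies\<close>

locale disjoint_games =
  fixes V V' :: "'a set" and EL ER EL' ER' :: "'a set set"
  assumes hypergraph_EL: "hypergraph V EL" and hypergraph_ER: "hypergraph V ER"
    and hypergraph_EL': "hypergraph V' EL'" and hypergraph_ER': "hypergraph V' ER'"
    and disjoint: "V \<inter> V' = {}"
begin

abbreviation union_wins :: "'a set \<Rightarrow> 'a set \<Rightarrow> bool \<Rightarrow> bool" where
  "union_wins \<equiv> lwins (V \<union> V') (EL \<union> EL') (ER \<union> ER')"

definition valid_position :: "'a set \<Rightarrow> 'a set \<Rightarrow> 'a set \<Rightarrow> 'a set \<Rightarrow> bool" where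
  "valid_position A B A' B' \<longleftrightarrow>
     A \<subseteq> V \<and> B \<subseteq> V \<and> A' \<subseteq> V' \<and> B' \<subseteq> V' \<and> \<not> fills ER' B'"

definition free :: "'a set \<Rightarrow> 'a set \<Rightarrow> 'a set \<Rightarrow> 'a set \<Rightarrow> 'a set" where
  "free A B A' B' = (V \<union> V') - (A \<union> A') - (B \<union> B')"

text \<open>The flag \<open>t\<close> tells
  whether Left is to move in his delay game on \<open>G\<close>, the flag \<open>t'\<close> whether Right is to move in
  her delay game on \<open>G'\<close>; in the union Left is to move unless both wait for Right, and
  Left is never to move in both at once. The invariant is that Right's delay on \<open>G'\<close> is at
  least Left's delay \<open>k\<close> on \<open>G\<close>.\<close>

definition wins_by_delay :: "bool \<Rightarrow> bool \<Rightarrow> 'a set \<Rightarrow> 'a set \<Rightarrow> 'a set \<Rightarrow> 'a set \<Rightarrow> bool" where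
  "wins_by_delay t t' A B A' B' \<longleftrightarrow>
     (\<forall>k. ldelay_le V EL ER A B t k \<longrightarrow> (\<forall>j<k. \<not> ldelay_le V' ER' EL' B' A' t' j) \<longrightarrow>
          union_wins (A \<union> A') (B \<union> B') (t \<or> \<not> t'))"

lemma fills_union_blue:
  "A \<subseteq> V \<Longrightarrow> A' \<subseteq> V' \<Longrightarrow> fills (EL \<union> EL') (A \<union> A') \<longleftrightarrow> fills EL A \<or> fills EL' A'"
  using fills_Un_disjoint[OF hypergraph_EL, of A' A] fills_Un_disjoint[OF hypergraph_EL', of A A'] disjoint
  by (auto simp: fills_Un Un_commute)

lemma fills_union_red:
  "B \<subseteq> V \<Longrightarrow> B' \<subseteq> V' \<Longrightarrow> fills (ER \<union> ER') (B \<union> B') \<longleftrightarrow> fills ER B \<or> fills ER' B'"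
  using fills_Un_disjoint[OF hypergraph_ER, of B' B] fills_Un_disjoint[OF hypergraph_ER', of B B'] disjoint
  by (auto simp: fills_Un Un_commute)

lemma free_eq:
  "valid_position A B A' B' \<Longrightarrow> free A B A' B' = (V - A - B) \<union> (V' - A' - B')"
  using disjoint unfolding valid_position_def free_def by blast

lemma card_free_insert_less:
  assumes "v \<in> free A B A' B'"
  shows "card (free (insert v A) B A' B') < card (free A B A' B')"
    and "card (free A (insert v B) A' B') < card (free A B A' B')"
    and "card (free A B (insert v A') B') < card (free A B A' B')"
    and "card (free A B A' (insert v B')) < card (free A B A' B')"
proof -
  have "finite (V \<union> V')" using hypergraph_EL hypergraph_EL' by (simp add: hypergraph_def)
  from card_Diff_insert_less[OF this assms[unfolded free_def]]
  show "card (free (insert v A) B A' B') < card (free A B A' B')"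
    and "card (free A (insert v B) A' B') < card (free A B A' B')"
    and "card (free A B (insert v A') B') < card (free A B A' B')"
    and "card (free A B A' (insert v B')) < card (free A B A' B')"
    unfolding free_def by simp_all
qed

lemma union_wins_base:
  "valid_position A B A' B' \<Longrightarrow> fills EL A \<or> fills EL' A' \<Longrightarrow> \<not> fills ER B \<Longrightarrow>
   union_wins (A \<union> A') (B \<union> B') t"
  unfolding valid_position_def by (simp add: lwins.base fills_union_blue fills_union_red)

lemma union_wins_left_move:
  assumes "valid_position A B A' B'" and "\<not> fills ER B" and "v \<in> free A B A' B'"
    and "union_wins (insert v (A \<union> A')) (B \<union> B') False"
  shows "union_wins (A \<union> A') (B \<union> B') True"
  using assms(1,2) assms(3,4)[unfolded free_def]
  by (intro lwins_left_move_any) (auto simp: valid_position_def fills_union_red)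

lemma union_wins_right_move:
  assumes "valid_position A B A' B'" and "\<not> fills EL A" and "\<not> fills EL' A'" and "\<not> fills ER B"
    and "free A B A' B' \<noteq> {}"
    and "\<And>w. w \<in> free A B A' B' \<Longrightarrow> union_wins (A \<union> A') (insert w (B \<union> B')) True"
  shows "union_wins (A \<union> A') (B \<union> B') False"
  using assms unfolding free_def
  by (intro lwins.right_move) (auto simp: valid_position_def fills_union_blue fills_union_red)

context
  fixes A B A' B' :: "'a set"
  assumes pos: "valid_position A B A' B'"
    and IH: "\<And>t t' A2 B2 A2' B2'. card (free A2 B2 A2' B2') < card (free A B A' B') \<Longrightarrow>
      valid_position A2 B2 A2' B2' \<Longrightarrow> (t \<longrightarrow> t') \<Longrightarrow> wins_by_delay t t' A2 B2 A2' B2'"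
begin

lemma wins_by_delay_left_turn: "wins_by_delay True True A B A' B'"
  unfolding wins_by_delay_def
proof (intro allI impI)
  fix k assume delay: "ldelay_le V EL ER A B True k"
    and slow: "\<forall>j<k. \<not> ldelay_le V' ER' EL' B' A' True j"
  from delay show "union_wins (A \<union> A') (B \<union> B') (True \<or> \<not> True)"
  proof (cases rule: ldelay_le.cases)
    case base
    with pos show ?thesis by (simp add: union_wins_base)
  next
    case (left_move v)
    with pos have v: "v \<in> free A B A' B'" by (simp add: free_eq)
    from pos left_move(3) have "valid_position (insert v A) B A' B'"
      unfolding valid_position_def by blast
    with card_free_insert_less(1)[OF v] have "wins_by_delay False True (insert v A) B A' B'"
      by (simp add: IH)
    with left_move(4) slow have "union_wins (insert v (A \<union> A')) (B \<union> B') False"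
      unfolding wins_by_delay_def by simp
    with pos left_move(2) v show ?thesis by (simp add: union_wins_left_move)
  qed simp
qed

text \<open>A move of Right in \<open>G'\<close> is a pass in \<open>G\<close> that is charged only at Left's next move,
  and it cannot lower her delay on \<open>G'\<close>.\<close>

lemma wins_by_delay_right_turn: "wins_by_delay False True A B A' B'"
  unfolding wins_by_delay_def
proof (intro allI impI)
  fix k assume delay: "ldelay_le V EL ER A B False k"
    and slow: "\<forall>j<k. \<not> ldelay_le V' ER' EL' B' A' True j"
  from delay show "union_wins (A \<union> A') (B \<union> B') (False \<or> \<not> True)"
  proof (cases rule: ldelay_le.cases)
    case base
    with pos show ?thesis by (simp add: union_wins_base)
  next
    case right_move
    show ?thesis
    proof (cases "fills EL' A'")
      case True
      with pos right_move(2) show ?thesis by (simp add: union_wins_base)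
    next
      case False
      have "union_wins (A \<union> A') (insert w (B \<union> B')) True" if w: "w \<in> free A B A' B'" for w
      proof -
        from w pos consider "w \<in> V - A - B" | "w \<in> V' - B' - A'" by (auto simp: free_eq)
        then show ?thesis
        proof cases
          case 1
          with pos have "valid_position A (insert w B) A' B'" unfolding valid_position_def by blast
          with card_free_insert_less(2)[OF w] have "wins_by_delay True True A (insert w B) A' B'"
            by (simp add: IH)
          with right_move(4) 1 slow show ?thesis unfolding wins_by_delay_def by auto
        next
          case 2
          have slow': "\<forall>j<k. \<not> ldelay_le V' ER' EL' (insert w B') A' False j"
            using no_ldelay_le_after_left_move[OF slow False 2] .
          then have "\<not> fills ER' (insert w B')"
            using right_move(6) False ldelay_le.base by blast
          with pos 2 have "valid_position A B A' (insert w B')" unfolding valid_position_def by blast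
          with card_free_insert_less(4)[OF w] have "wins_by_delay False False A B A' (insert w B')"
            by (simp add: IH)
          with delay slow' show ?thesis unfolding wins_by_delay_def by simp
        qed
      qed
      moreover have "free A B A' B' \<noteq> {}" using pos right_move(3) by (auto simp: free_eq)
      ultimately have "union_wins (A \<union> A') (B \<union> B') False"
        using pos right_move(1,2) False by (intro union_wins_right_move)
      then show ?thesis by simp
    qed
  qed simp
qed

text \<open>Right has just moved in \<open>G'\<close>. If the pass this amounts to in \<open>G\<close> keeps Left's delay
  below Right's, Left continues in \<open>G\<close>; otherwise he answers in \<open>G'\<close> at a vertex after which
  Right's delay stays at least his. If no such vertex existed, Right's delay before her
  move would have been smaller than Left's.\<close>

lemma wins_by_delay_mixed_turn: "wins_by_delay False False A B A' B'"
  unfolding wins_by_delay_def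
proof (intro allI impI)
  fix k assume delay: "ldelay_le V EL ER A B False k"
    and slow: "\<forall>j<k. \<not> ldelay_le V' ER' EL' B' A' False j"
  from delay show "union_wins (A \<union> A') (B \<union> B') (False \<or> \<not> False)"
  proof (cases rule: ldelay_le.cases)
    case base
    with pos show ?thesis by (simp add: union_wins_base)
  next
    case right_move
    show ?thesis
    proof (cases "fills EL' A'")
      case True
      with pos right_move(2) show ?thesis by (simp add: union_wins_base)
    next
      case False
      show ?thesis
      proof (cases "\<forall>j<k - 1. \<not> ldelay_le V' ER' EL' B' A' True j")
        case True
        with right_move(5) wins_by_delay_left_turn show ?thesis
          unfolding wins_by_delay_def by simp
      next
        case faster: False
        have "\<exists>u\<in>V' - B' - A'. \<not> ldelay_le V' ER' EL' B' (insert u A') True (k - 1)"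
        proof (rule ccontr)
          assume "\<not> ?thesis"
          with faster False have "ldelay_le V' ER' EL' B' A' False (k - 1)"
            by (auto intro: ldelay_le_right_turn)
          with slow right_move(6) show False by simp
        qed
        then obtain u where u: "u \<in> V' - B' - A'"
          and u_slow: "\<not> ldelay_le V' ER' EL' B' (insert u A') True (k - 1)" by blast
        have slow': "\<forall>j<k. \<not> ldelay_le V' ER' EL' B' (insert u A') True j"
        proof (intro allI impI notI)
          fix j assume "j < k" and "ldelay_le V' ER' EL' B' (insert u A') True j"
          then have "ldelay_le V' ER' EL' B' (insert u A') True (k - 1)"
            by (auto elim: ldelay_le_mono)
          with u_slow show False by contradiction
        qed
        from pos u have u_free: "u \<in> free A B A' B'" by (auto simp: free_eq)
        from pos u have "valid_position A B (insert u A') B'" unfolding valid_position_def by blast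
        with card_free_insert_less(3)[OF u_free] have "wins_by_delay False True A B (insert u A') B'"
          by (simp add: IH)
        with delay slow' have "union_wins (insert u (A \<union> A')) (B \<union> B') False"
          unfolding wins_by_delay_def by simp
        with pos right_move(2) u_free show ?thesis by (simp add: union_wins_left_move)
      qed
    qed
  qed simp
qed

end

lemma wins_by_delay:
  "valid_position A B A' B' \<Longrightarrow> (t \<longrightarrow> t') \<Longrightarrow> wins_by_delay t t' A B A' B'"
proof (induction "card (free A B A' B')" arbitrary: A B A' B' t t' rule: less_induct)
  case less
  note step = wins_by_delay_left_turn wins_by_delay_right_turn wins_by_delay_mixed_turn
  from less.prems(2) consider "t \<and> t'" | "\<not> t \<and> t'" | "\<not> t \<and> \<not> t'" by blast
  then show ?case
    by cases (auto intro: step[OF less.prems(1) less.hyps])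
qed

lemma left_first_wins_union:
  assumes wins: "left_first_wins V EL ER"
    and le: "left_delay V EL ER \<le> right_delay V' EL' ER'"
  shows "left_first_wins (V \<union> V') (EL \<union> EL') (ER \<union> ER')"
proof -
  have "finite V" using hypergraph_EL by (simp add: hypergraph_def)
  with wins have "ldelay_le V EL ER {} {} True (card V)"
    unfolding left_first_wins_def using lwins_imp_ldelay_le_card by fastforce
  then obtain k where delay: "ldelay_le V EL ER {} {} True k" and delay_value: "left_delay V EL ER = enat k"
    by (rule left_delay_attained)
  have slow: "\<forall>j<k. \<not> ldelay_le V' ER' EL' {} {} True j"
  proof (intro allI impI notI)
    fix j assume "j < k" and "ldelay_le V' ER' EL' {} {} True j"
    then have "right_delay V' EL' ER' \<le> enat j" unfolding right_delay_def by (simp add: left_delay_le)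
    with le delay_value have "enat k \<le> enat j" by (metis order.trans)
    with \<open>j < k\<close> show False by simp
  qed
  have "valid_position {} {} {} {}"
    using not_fills_empty[OF hypergraph_ER'] by (simp add: valid_position_def)
  then have "wins_by_delay True True {} {} {} {}" by (simp add: wins_by_delay)
  with delay slow show ?thesis unfolding wins_by_delay_def left_first_wins_def by simp
qed

end

lemma right_first_wins_union:
  assumes "disjoint_games V V' EL ER EL' ER'" and "right_first_wins V' EL' ER'"
    and "right_delay V' EL' ER' \<le> left_delay V EL ER"
  shows "right_first_wins (V \<union> V') (EL \<union> EL') (ER \<union> ER')"
proof -
  interpret swapped: disjoint_games V' V ER' EL' ER EL
    using assms(1) by (auto simp: disjoint_games_def)
  have "left_first_wins (V' \<union> V) (ER' \<union> ER) (EL' \<union> EL)"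
    using assms(2,3) unfolding right_first_wins_def right_delay_def
    by (intro swapped.left_first_wins_union) (simp_all add: left_first_wins_def right_delay_def)
  then show ?thesis by (simp add: right_first_wins_def left_first_wins_def Un_commute)
qed

theorem proposition3:
  fixes V V' :: "'a set" and EL ER EL' ER' :: "'a set set"
  assumes "hypergraph V EL" and "hypergraph V ER"
    and "hypergraph V' EL'" and "hypergraph V' ER'"
    and "V \<inter> V' = {}"
    and "left_first_wins V EL ER"
    and "right_first_wins V' EL' ER'"
  shows "(left_delay V EL ER \<le> right_delay V' EL' ER' \<longrightarrow>
            left_first_wins (V \<union> V') (EL \<union> EL') (ER \<union> ER'))
       \<and> (right_delay V' EL' ER' \<le> left_delay V EL ER \<longrightarrow>
            right_first_wins (V \<union> V') (EL \<union> EL') (ER \<union> ER'))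
       \<and> (left_first_wins (V \<union> V') (EL \<union> EL') (ER \<union> ER') \<or>
          right_first_wins (V \<union> V') (EL \<union> EL') (ER \<union> ER'))"
proof -
  have games: "disjoint_games V V' EL ER EL' ER'"
    using assms(1-5) by (simp add: disjoint_games_def)
  show ?thesis
    using disjoint_games.left_first_wins_union[OF games assms(6)]
      right_first_wins_union[OF games assms(7)] linear
    by blast
qed

end
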